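(* Let $k\ge 0$ and suppose $P_k(q)=P_{k,1}(q)\cdots P_{k,r}(q)$ is a factorization of $P_k$ into monic irreducible polynomials in $\mathbb{Z}[q]$, numbered so that $P_{k,1}(\alpha)=0$, where $\alpha$ is the unique root of $P_k$ in $(0,1)$. Then $P_{k,1}(1/\alpha)=0$, and for every $i\ge 2$ all roots of $P_{k,i}$ are roots of unity.
   Context: For $k\ge 0$, $P_{k}(q)=1+\sum_{l=1}^{k+1} q^{4l-4}(q^4-q^3-q^2-q)$, i.e. $P_0=q^4-q^3-q^2-q+1$, $P_k=(q^4+1)P_{k-1}-q^4P_{k-2}$ with $P_1=q^8-q^7-q^6-q^5+q^4-q^3-q^2-q+1$. $P_k$ has exactly one root $\alpha$ in $(0,1)$, and its roots are $\alpha$, $1/\alpha$, and complex numbers of absolute value $1$. *)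

theory Defs
  imports "HOL-Computational_Algebra.Polynomial" "HOL-Computational_Algebra.Polynomial_Factorial" Complex_Main
begin

definition Pk :: "nat \<Rightarrow> int poly" where
  "Pk k = 1 + (\<Sum>l = 1..k+1. monom 1 (4*l - 4) * [:0, -1, -1, -1, 1:])"

end

theory Submission
  imports Defs "Berlekamp_Zassenhaus.Factor_Bound"
begin

(*
  Let E_k(q) = q^(4k+8) - q^(4k+7) - q^(4k+6) - q^(4k+5) + q^3 + q^2 + q - 1, so that
  (q^4 - 1) P_k(q) = E_k(q).  The proof has three ingredients.

  (1) Kronecker's theorem: a monic integer polynomial whose complex roots all lie on the
      unit circle has only roots of unity as roots.  The Graeffe iterates of such a
      polynomial have roots z^(2^m), fixed degree and (by Mignotte's bound, the Mahler
      measure being 1) bounded coefficients; finitely many such polynomials exist, so the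
      powers z^(2^m) repeat.
  (2) The roots of P_k: E_k is anti-reciprocal, so 1/alpha is a root along with alpha, and
      on the unit circle E_k(e^(it)) vanishes exactly when a trigonometric sum G_k(t) does.
      The intermediate value theorem applied to a phase function yields 2k+1 zeros of G_k
      in (0, pi), hence 4k+2 unimodular roots e^(+-it).  Together with alpha and 1/alpha
      these are 4k+4 = deg P_k distinct roots: P_k is squarefree and has no other roots.
  (3) The factor f_0 vanishing at alpha has constant term +-1 (it divides P_k, and
      P_k(0) = 1), so the product of the moduli of its roots is 1 and it needs a root
      outside the unit disc, which can only be 1/alpha.  Any other factor f_i is coprime to
      f_0 (P_k is squarefree), so all its roots are unimodular and (1) applies.
*)

lemma linear_prod_nonzero: "(\<Prod>a\<leftarrow>as. [:- f a, 1:]) \<noteq> (0 :: 'a::idom poly)"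
  unfolding prod_list_zero_iff by auto

lemma poly_linear_prod_eq_0:
  fixes as :: "'a::idom list"
  shows "poly (\<Prod>a\<leftarrow>as. [:- a, 1:]) x = 0 \<longleftrightarrow> x \<in> set as"
  by (induct as) auto

lemma rsquarefree_linear_prod:
  fixes L :: "'a::idom list"
  assumes "distinct L"
  shows "rsquarefree (\<Prod>a\<leftarrow>L. [:- a, 1:])"
proof -
  have "Polynomial.order x (\<Prod>a\<leftarrow>L. [:- a, 1:]) \<le> 1" for x
    using assms
  proof (induct L)
    case Nil
    then show ?case by (simp add: order_0I)
  next
    case (Cons y ys)
    have nz: "[:- y, 1:] * (\<Prod>a\<leftarrow>ys. [:- a, 1:]) \<noteq> 0"
      using linear_prod_nonzero[of "\<lambda>a. a" "y # ys"] unfolding list.map prod_list.Cons .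
    have split: "Polynomial.order x (\<Prod>a\<leftarrow>y # ys. [:- a, 1:])
        = Polynomial.order x [:- y, 1:] + Polynomial.order x (\<Prod>a\<leftarrow>ys. [:- a, 1:])"
      unfolding list.map prod_list.Cons by (rule order_mult[OF nz])
    have linear: "Polynomial.order x [:- y, 1:] = (if y = x then 1 else 0)"
      unfolding order_linear' by simp
    have rest: "Polynomial.order x (\<Prod>a\<leftarrow>ys. [:- a, 1:]) = 0" if "y = x"
    proof (rule order_0I)
      show "poly (\<Prod>a\<leftarrow>ys. [:- a, 1:]) x \<noteq> 0"
        using that Cons.prems unfolding poly_linear_prod_eq_0 by simp
    qed
    show ?case using split linear rest Cons by simp
  qed
  moreover have "(\<Prod>a\<leftarrow>L. [:- a, 1:]) \<noteq> (0 :: 'a poly)"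
    by (rule linear_prod_nonzero[of "\<lambda>a. a"])
  ultimately show ?thesis unfolding rsquarefree_def by (meson le_neq_implies_less less_one)
qed

lemma rsquarefree_dvd_no_common_root:
  assumes sf: "rsquarefree p" and dvd: "f * g dvd p" and root: "poly f w = 0"
  shows "poly g w \<noteq> 0"
proof
  assume root_g: "poly g w = 0"
  have "p \<noteq> 0" using sf by (simp add: rsquarefree_def)
  hence fg: "f * g \<noteq> 0" using dvd by auto
  hence "f \<noteq> 0" "g \<noteq> 0" by auto
  hence "Polynomial.order w f \<ge> 1" "Polynomial.order w g \<ge> 1"
    using root root_g order_root by (metis less_one not_le)+
  moreover have "Polynomial.order w (f * g) = Polynomial.order w f + Polynomial.order w g"
    using fg by (rule order_mult)
  moreover have "Polynomial.order w (f * g) \<le> Polynomial.order w p"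
    by (rule dvd_imp_order_le[OF \<open>p \<noteq> 0\<close> dvd])
  moreover have "Polynomial.order w p = 0 \<or> Polynomial.order w p = 1"
    using sf unfolding rsquarefree_def by blast
  ultimately show False by linarith
qed

lemma distinct_sublist_length_eq:
  assumes "distinct R" "set R \<subseteq> set L" "length R = length L"
  shows "distinct L \<and> set L = set R"
proof -
  have "card (set L) \<le> length L" by (rule card_length)
  moreover have "card (set R) = length L" using assms(1,3) by (simp add: distinct_card)
  moreover have "card (set R) \<le> card (set L)" using assms(2) by (intro card_mono) auto
  ultimately show ?thesis using assms(2) card_subset_eq[OF _ assms(2)] card_distinct[of L] by auto
qed

lemma prod_list_unit_interval:
  fixes f :: "'a \<Rightarrow> real"
  assumes "\<forall>x\<in>set xs. 0 \<le> f x \<and> f x \<le> 1"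
  shows "0 \<le> prod_list (map f xs) \<and> prod_list (map f xs) \<le> 1"
  using assms by (induct xs) (auto intro: mult_le_one)

lemma prod_list_le_member:
  fixes f :: "'a \<Rightarrow> real"
  assumes "\<forall>x\<in>set xs. 0 \<le> f x \<and> f x \<le> 1" and "y \<in> set xs"
  shows "prod_list (map f xs) \<le> f y"
proof -
  have "prod_list (map f xs) = f y * prod_list (map f (remove1 y xs))"
    using assms(2) by (rule prod_list_map_remove1)
  moreover have "prod_list (map f (remove1 y xs)) \<le> 1"
    using assms(1) set_remove1_subset[of y xs]
    by (intro prod_list_unit_interval[THEN conjunct2]) blast
  ultimately show ?thesis using assms by (simp add: mult_left_le)
qed

lemma poly_of_int_of_real:
  "poly (map_poly (of_int :: int \<Rightarrow> complex) p) (of_real x)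
     = of_real (poly (map_poly (of_int :: int \<Rightarrow> real) p) x)"
proof -
  have "map_poly (of_int :: int \<Rightarrow> complex) p
      = map_poly of_real (map_poly (of_int :: int \<Rightarrow> real) p)"
    by (simp add: map_poly_map_poly o_def)
  thus ?thesis by (simp add: of_real_hom.poly_map_poly)
qed

lemma monic_complex_factorization:
  fixes f :: "int poly"
  assumes "lead_coeff f = 1"
  shows "map_poly of_int f = (\<Prod>a\<leftarrow>complex_roots_int f. [:- a, 1:])"
  using complex_roots_int(1)[of f] assms by simp

text \<open>If the constant term of a monic integer polynomial is a unit, the product of the
  moduli of its roots is 1; so a root inside the unit disc forces a root outside it.\<close>
lemma unit_constant_root_inside_imp_root_outside:
  fixes f :: "int poly" and w :: complex
  assumes mon: "lead_coeff f = 1" and unit: "is_unit (poly f 0)"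
    and root: "poly (map_poly of_int f) w = 0" and inside: "cmod w < 1"
  shows "\<exists>v. poly (map_poly of_int f) v = 0 \<and> cmod v > 1"
proof (rule ccontr)
  assume no_root_outside: "\<not> ?thesis"
  define as where "as = complex_roots_int f"
  have fac: "map_poly of_int f = (\<Prod>a\<leftarrow>as. [:- a, 1:])"
    unfolding as_def using mon by (rule monic_complex_factorization)
  have small: "\<forall>a\<in>set as. 0 \<le> cmod a \<and> cmod a \<le> 1"
    using no_root_outside unfolding fac poly_linear_prod_eq_0 by (auto simp: not_less)
  have "\<bar>poly f 0\<bar> = 1" using unit by (simp add: zdvd1_eq)
  hence "1 = cmod (poly (map_poly (of_int :: int \<Rightarrow> complex) f) 0)"
    by (simp add: of_int_hom.poly_map_poly_0)
  also have "\<dots> = (\<Prod>a\<leftarrow>as. cmod a)"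
    unfolding fac by (induct as) (auto simp: norm_mult)
  also have "\<dots> \<le> cmod w"
    using root unfolding fac poly_linear_prod_eq_0 by (rule prod_list_le_member[OF small])
  finally show False using inside by simp
qed

section \<open>Kronecker's theorem\<close>

definition bounded_int_polys :: "nat \<Rightarrow> int \<Rightarrow> int poly set" where
  "bounded_int_polys d B =
     {p. p \<noteq> 0 \<and> degree p \<le> d \<and> (\<forall>i. \<bar>Polynomial.coeff p i\<bar> \<le> B)}"

lemma finite_bounded_int_polys: "finite (bounded_int_polys d B)"
proof -
  have "inj_on (\<lambda>p. restrict (Polynomial.coeff p) {..d}) (bounded_int_polys d B)"
  proof (rule inj_onI)
    fix p q
    assume "p \<in> bounded_int_polys d B" "q \<in> bounded_int_polys d B"
      and eq: "restrict (Polynomial.coeff p) {..d} = restrict (Polynomial.coeff q) {..d}"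
    show "p = q"
    proof (rule poly_eqI)
      fix n
      show "Polynomial.coeff p n = Polynomial.coeff q n"
        using fun_cong[OF eq, of n] \<open>p \<in> _\<close> \<open>q \<in> _\<close>
        by (cases "n \<le> d") (auto simp: bounded_int_polys_def coeff_eq_0)
    qed
  qed
  moreover have "(\<lambda>p. restrict (Polynomial.coeff p) {..d}) ` bounded_int_polys d B
      \<subseteq> PiE {..d} (\<lambda>_. {-B..B})"
    by (force simp: bounded_int_polys_def abs_le_iff)
  moreover have "finite (PiE {..d} (\<lambda>_. {-B..B}))" by (intro finite_PiE) auto
  ultimately show ?thesis using inj_on_finite by blast
qed

lemma finite_roots_bounded_int_polys:
  "finite (\<Union>p\<in>bounded_int_polys d B. {x::complex. poly (map_poly of_int p) x = 0})"
proof (intro finite_UN_I finite_bounded_int_polys)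
  fix p assume "p \<in> bounded_int_polys d B"
  hence "map_poly (of_int :: int \<Rightarrow> complex) p \<noteq> 0" by (simp add: bounded_int_polys_def)
  thus "finite {x::complex. poly (map_poly of_int p) x = 0}" by (rule poly_roots_finite)
qed

lemma root_of_unity_if_finitely_many_squarings:
  fixes z :: "'a::idom"
  assumes "z \<noteq> 0" and fin: "finite (range (\<lambda>m::nat. z ^ (2 ^ m)))"
  shows "\<exists>n>0. z ^ n = 1"
proof -
  have "\<not> inj (\<lambda>m::nat. z ^ (2 ^ m))"
    using fin finite_imageD by fastforce
  then obtain a b :: nat where "a < b" and eq: "z ^ (2 ^ a) = z ^ (2 ^ b)"
    unfolding inj_def by (metis nat_neq_iff)
  hence lt: "(2::nat) ^ a < 2 ^ b" by simp
  hence "z ^ (2 ^ b) = z ^ (2 ^ a) * z ^ (2 ^ b - 2 ^ a)" by (simp flip: power_add)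
  hence "z ^ (2 ^ b - 2 ^ a) = 1" using eq assms(1) by simp
  thus ?thesis using lt by (intro exI[of _ "2 ^ b - 2 ^ a"]) simp
qed

lemma graeffe_linear_factors:
  fixes f :: "int poly"
  assumes "lead_coeff f = 1"
  shows "map_poly (of_int :: int \<Rightarrow> complex) (graeffe_poly_impl f m)
           = (\<Prod>a\<leftarrow>complex_roots_int f. [:- (a ^ (2 ^ m)), 1:])"
proof -
  have fac: "map_poly of_int f = Polynomial.smult 1 (\<Prod>a\<leftarrow>complex_roots_int f. [:- a, 1:])"
    using monic_complex_factorization[OF assms] by simp
  have "map_poly (of_int :: int \<Rightarrow> complex) (graeffe_poly_impl f m)
          = graeffe_poly_impl (map_poly of_int f) m"
    by (simp add: of_int_hom.graeffe_poly_impl_hom)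
  also have "\<dots> = graeffe_poly 1 (complex_roots_int f) m" by (rule graeffe_poly_impl[OF fac])
  finally show ?thesis by (simp add: graeffe_poly_def)
qed

lemma mahler_measure_unimodular:
  fixes f :: "int poly"
  assumes mon: "lead_coeff f = 1"
    and unimodular: "\<And>w. poly (map_poly of_int f) w = 0 \<Longrightarrow> cmod w = 1"
  shows "mahler_measure f = 1"
proof -
  define as where "as = complex_roots_int f"
  have "\<forall>a\<in>set as. cmod a = 1"
    using unimodular unfolding as_def monic_complex_factorization[OF mon] poly_linear_prod_eq_0
    by blast
  hence "(\<Prod>a\<leftarrow>as. max 1 (cmod a)) = 1"
    by (induct as) auto
  thus ?thesis using mon
    unfolding as_def mahler_measure_def mahler_measure_poly_def complex_roots_int_def by simp
qed

lemma graeffe_bounded: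
  fixes f :: "int poly"
  assumes mon: "lead_coeff f = 1"
    and unimodular: "\<And>w. poly (map_poly of_int f) w = 0 \<Longrightarrow> cmod w = 1"
  shows "graeffe_poly_impl f m \<in> bounded_int_polys (degree f) (2 ^ degree f)"
proof -
  let ?g = "graeffe_poly_impl f m"
  have fac: "map_poly (of_int :: int \<Rightarrow> complex) ?g
      = (\<Prod>a\<leftarrow>complex_roots_int f. [:- (a ^ (2 ^ m)), 1:])"
    using mon by (rule graeffe_linear_factors)
  have "degree (map_poly (of_int :: int \<Rightarrow> complex) ?g) = length (complex_roots_int f)"
    unfolding fac by (rule degree_linear_factors)
  hence deg: "degree ?g = degree f" using complex_roots_int(2)[of f] by simp
  have nz: "?g \<noteq> 0"
  proof
    assume "?g = 0"
    hence "(\<Prod>a\<leftarrow>complex_roots_int f. [:- (a ^ (2 ^ m)), 1:]) = 0"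
      unfolding fac[symmetric] by simp
    thus False
      using linear_prod_nonzero[of "\<lambda>a. a ^ (2 ^ m)" "complex_roots_int f"] by contradiction
  qed
  have "real_of_int \<bar>Polynomial.coeff ?g i\<bar> \<le> 2 ^ degree f" for i
  proof -
    have "real_of_int \<bar>Polynomial.coeff ?g i\<bar> \<le> real (degree f choose i) * mahler_measure ?g"
      using Mignotte_bound[of ?g i] deg by simp
    also have "mahler_measure ?g = 1"
      using mahler_measure_unimodular[OF mon unimodular] by (simp add: graeffe_poly_impl_mahler)
    also have "real (degree f choose i) * 1 \<le> real (2 ^ degree f)"
      using binomial_le_pow2[of "degree f" i] by (simp only: mult_1_right of_nat_le_iff)
    also have "real (2 ^ degree f) = 2 ^ degree f" by simp
    finally show ?thesis .
  qed
  hence "\<bar>Polynomial.coeff ?g i\<bar> \<le> 2 ^ degree f" for i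
    by (metis of_int_le_numeral_power_cancel_iff)
  thus ?thesis using deg nz by (simp add: bounded_int_polys_def)
qed

theorem kronecker:
  fixes f :: "int poly" and z :: complex
  assumes mon: "lead_coeff f = 1"
    and unimodular: "\<And>w. poly (map_poly of_int f) w = 0 \<Longrightarrow> cmod w = 1"
    and root: "poly (map_poly of_int f) z = 0"
  shows "\<exists>n>0. z ^ n = 1"
proof (rule root_of_unity_if_finitely_many_squarings)
  show "z \<noteq> 0" using unimodular[OF root] by auto
  have "z \<in> set (complex_roots_int f)"
    using root unfolding monic_complex_factorization[OF mon] poly_linear_prod_eq_0 .
  hence "poly (\<Prod>b\<leftarrow>map (\<lambda>a. a ^ (2 ^ m)) (complex_roots_int f). [:- b, 1:])
      (z ^ (2 ^ m)) = 0" for m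
    unfolding poly_linear_prod_eq_0 by simp
  hence "poly (map_poly of_int (graeffe_poly_impl f m)) (z ^ (2 ^ m)) = 0" for m
    unfolding graeffe_linear_factors[OF mon] by (simp add: o_def)
  hence "range (\<lambda>m. z ^ (2 ^ m))
           \<subseteq> (\<Union>p\<in>bounded_int_polys (degree f) (2 ^ degree f).
                 {x. poly (map_poly of_int p) x = 0})"
    using graeffe_bounded[OF mon unimodular] by blast
  thus "finite (range (\<lambda>m. z ^ (2 ^ m)))"
    using finite_roots_bounded_int_polys finite_subset by blast
qed

definition Qp :: "int poly" where "Qp = [:0, -1, -1, -1, 1:]"

lemma Pk_0: "Pk 0 = 1 + Qp"
  unfolding Pk_def Qp_def by simp

lemma Pk_Suc: "Pk (Suc k) = Pk k + Polynomial.monom 1 (4*k+4) * Qp"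
  unfolding Pk_def Qp_def by (simp add: algebra_simps)

lemma poly_Qp: "poly (map_poly (of_int :: int \<Rightarrow> 'a::comm_ring_1) Qp) x = x^4 - x^3 - x^2 - x"
  by (simp add: Qp_def algebra_simps eval_nat_numeral)

lemma poly_Pk_0:
  "poly (map_poly (of_int :: int \<Rightarrow> 'a::comm_ring_1) (Pk 0)) x = 1 + (x^4 - x^3 - x^2 - x)"
  by (simp only: Pk_0 of_int_poly_hom.hom_add poly_add poly_Qp of_int_poly_hom.hom_one poly_1)

lemma poly_Pk_Suc:
  "poly (map_poly (of_int :: int \<Rightarrow> 'a::comm_ring_1) (Pk (Suc k))) x
     = poly (map_poly of_int (Pk k)) x + x^(4*k+4) * (x^4 - x^3 - x^2 - x)"
  by (simp only: Pk_Suc of_int_poly_hom.hom_add of_int_poly_hom.hom_mult poly_add poly_mult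
        of_int_hom.map_poly_hom_monom poly_monom of_int_1 mult_1_left poly_Qp)

text \<open>E_k is the closed form of (q^4 - 1) P_k(q); its "half" A_k makes its symmetry visible.\<close>
definition Ek :: "nat \<Rightarrow> 'a::comm_ring_1 \<Rightarrow> 'a" where
  "Ek k z = z^(4*k+8) - z^(4*k+7) - z^(4*k+6) - z^(4*k+5) + z^3 + z^2 + z - 1"

definition Ak :: "nat \<Rightarrow> 'a::comm_ring_1 \<Rightarrow> 'a" where
  "Ak k z = z^(2*k+4) - z^(2*k+3) - z^(2*k+2) - z^(2*k+1)"

lemma Pk_closed_form:
  fixes x :: "'a::comm_ring_1"
  shows "(x^4 - 1) * poly (map_poly of_int (Pk k)) x = Ek k x"
proof (induct k)
  case 0
  show ?case unfolding poly_Pk_0 Ek_def by (simp add: algebra_simps eval_nat_numeral)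
next
  case (Suc k)
  define y where "y = x^(4*k+4)"
  have pow: "x^(4*k+8) = y*x^4" "x^(4*k+7) = y*x^3" "x^(4*k+6) = y*x^2" "x^(4*k+5) = y*x^1"
    "x^(4*Suc k+8) = y*x^8" "x^(4*Suc k+7) = y*x^7" "x^(4*Suc k+6) = y*x^6" "x^(4*Suc k+5) = y*x^5"
    unfolding y_def by (subst power_add[symmetric], simp add: algebra_simps)+
  have "(x^4 - 1) * poly (map_poly of_int (Pk (Suc k))) x
      = Ek k x + y * (x^4 - 1) * (x^4 - x^3 - x^2 - x)"
    unfolding poly_Pk_Suc Suc[symmetric] y_def by (simp add: algebra_simps)
  also have "\<dots> = Ek (Suc k) x"
    unfolding Ek_def pow by (simp add: algebra_simps eval_nat_numeral)
  finally show ?case .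
qed

lemma power_mult_inverse_power:
  fixes z w :: "'a::comm_ring_1"
  assumes "z * w = 1" and "N = n + i"
  shows "z^N * w^n = z^i"
proof -
  have "z^N * w^n = z^i * (z*w)^n"
    using assms(2) by (simp add: power_add power_mult_distrib algebra_simps)
  thus ?thesis using assms(1) by simp
qed

lemma Ek_split:
  fixes z w :: "'a::comm_ring_1"
  assumes zw: "z * w = 1"
  shows "Ek k z = z^(2*k+4) * (Ak k z - Ak k w)"
proof -
  have inv: "z^(2*k+4) * w^(2*k+4) = 1" "z^(2*k+4) * w^(2*k+3) = z"
    "z^(2*k+4) * w^(2*k+2) = z^2" "z^(2*k+4) * w^(2*k+1) = z^3"
    by (rule power_mult_inverse_power[OF zw, where i=0, simplified]
          power_mult_inverse_power[OF zw, where i=1, simplified]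
          power_mult_inverse_power[OF zw]; simp)+
  have sq: "z^(2*k+4) * z^(2*k+4) = z^(4*k+8)" "z^(2*k+4) * z^(2*k+3) = z^(4*k+7)"
    "z^(2*k+4) * z^(2*k+2) = z^(4*k+6)" "z^(2*k+4) * z^(2*k+1) = z^(4*k+5)"
    by (subst power_add[symmetric], simp add: algebra_simps)+
  show ?thesis
    unfolding Ek_def Ak_def right_diff_distrib inv sq by (simp add: algebra_simps)
qed

lemma Pk_degree_lead: "degree (Pk k) = 4*k+4 \<and> lead_coeff (Pk k) = 1"
proof (induct k)
  case 0
  have "Pk 0 = [:1, -1, -1, -1, 1:]" unfolding Pk_0 Qp_def
    by (rule poly_eqI) (simp add: coeff_pCons split: nat.split)
  thus ?case by simp
next
  case (Suc k)
  have Qp: "degree Qp = 4" "Polynomial.coeff Qp 4 = 1" "Qp \<noteq> 0"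
    by (simp_all add: Qp_def eval_nat_numeral)
  have deg: "degree (Polynomial.monom (1::int) (4*k+4) * Qp) = 4*k+8"
    using Qp by (simp add: degree_mult_eq degree_monom_eq)
  have lead: "Polynomial.coeff (Polynomial.monom (1::int) (4*k+4) * Qp) (4*k+8) = 1"
    using Qp by (simp add: coeff_monom_mult)
  have "degree (Pk k) < degree (Polynomial.monom (1::int) (4*k+4) * Qp)" using Suc deg by simp
  hence "degree (Pk (Suc k)) = 4*k+8" unfolding Pk_Suc using degree_add_eq_right deg by metis
  moreover have "Polynomial.coeff (Pk (Suc k)) (4*k+8) = 1"
    unfolding Pk_Suc using lead Suc coeff_eq_0[of "Pk k" "4*k+8"] by simp
  ultimately show ?case by simp
qed

lemma Pk_const_coeff: "poly (Pk k) 0 = 1"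
proof -
  have "poly (map_poly (of_int :: int \<Rightarrow> int) (Pk k)) 0 = 1"
    by (induct k) (simp_all only: poly_Pk_0 poly_Pk_Suc, simp_all)
  thus ?thesis by simp
qed

lemma dvd_Pk_unit_const:
  assumes "f dvd Pk k"
  shows "is_unit (poly f 0)"
proof -
  from assms obtain h where "Pk k = f * h" by (erule dvdE)
  hence "poly f 0 * poly h 0 = 1" using Pk_const_coeff[of k] by simp
  thus ?thesis by (metis dvd_triv_left)
qed

lemma Pk_inverse_root:
  fixes a :: real
  assumes a: "0 < a" "a < 1" and root: "poly (map_poly of_int (Pk k)) a = 0"
  shows "poly (map_poly of_int (Pk k)) (1/a) = 0"
proof -
  define w where "w = 1/a"
  have aw: "a * w = 1" "w * a = 1" using a unfolding w_def by simp_all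
  have "Ek k a = 0" using Pk_closed_form[of a k] root by simp
  hence "Ak k a = Ak k w" using Ek_split[OF aw(1)] a by simp
  hence "Ek k w = 0" using Ek_split[OF aw(2)] by simp
  moreover have "w > 1" using a unfolding w_def by simp
  hence "1 < w^4" by (intro one_less_power) auto
  ultimately show ?thesis using Pk_closed_form[of w k] unfolding w_def by simp
qed

section \<open>The roots of P_k on the unit circle\<close>

text \<open>On the unit circle z = e^(it) the factor A_k(z) - A_k(1/z) equals 2 i G_k(t).\<close>
definition Gk :: "nat \<Rightarrow> real \<Rightarrow> real" where
  "Gk k t = sin ((2*real k+4)*t) - sin ((2*real k+3)*t)
     - sin ((2*real k+2)*t) - sin ((2*real k+1)*t)"

lemma Im_Ak_cis: "Im (Ak k (cis t)) = Gk k t"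
proof -
  have "Im (Ak k (cis t)) = sin (real (2*k+4)*t) - sin (real (2*k+3)*t) - sin (real (2*k+2)*t)
      - sin (real (2*k+1)*t)"
    by (simp only: Ak_def DeMoivre minus_complex.sel cis.sel)
  thus ?thesis unfolding Gk_def by (simp add: algebra_simps)
qed

lemma Gk_minus: "Gk k (-t) = - Gk k t"
  unfolding Gk_def by simp

text \<open>Away from the zeros of sin 2t, e^(it) is not a 4th root of unity, so it is a root of
  P_k as soon as it is a root of E_k.\<close>
lemma cis_power4_neq_1:
  assumes "sin (2*t) \<noteq> 0"
  shows "cis t ^ 4 \<noteq> 1"
proof
  assume "cis t ^ 4 = 1"
  moreover have "cis t ^ 4 - 1 = (cis t ^ 2 - 1) * (cis t ^ 2 + 1)"
    by (simp add: algebra_simps eval_nat_numeral)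
  ultimately have "cis t ^ 2 = 1 \<or> cis t ^ 2 = -1" by (simp add: eq_neg_iff_add_eq_0)
  hence "Im (cis t ^ 2) = 0" by auto
  moreover have "Im (cis t ^ 2) = sin (2*t)" by (simp add: DeMoivre)
  ultimately show False using assms by simp
qed

lemma cis_root_Pk:
  assumes "sin (2*t) \<noteq> 0" and G: "Gk k t = 0"
  shows "poly (map_poly (of_int :: int \<Rightarrow> complex) (Pk k)) (cis t) = 0"
proof -
  define z where "z = cis t"
  have "z * cnj z = 1" unfolding z_def by (simp add: cis_cnj cis_mult)
  hence "Ek k z = z^(2*k+4) * (Ak k z - cnj (Ak k z))"
    using Ek_split by (simp add: Ak_def)
  also have "cnj (Ak k z) = Ak k z"
    using G Im_Ak_cis unfolding z_def by (simp add: complex_eq_iff)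
  finally have "(z^4 - 1) * poly (map_poly of_int (Pk k)) z = 0" by (simp add: Pk_closed_form)
  thus ?thesis using cis_power4_neq_1[OF assms(1)] unfolding z_def by simp
qed

text \<open>Grouping the four sines around the midpoint frequency 2k+5/2.\<close>
lemma Gk_phase_form:
  "Gk k t = 2 * (cos ((2*real k+5/2)*t) * sin (3*t/2) - sin ((2*real k+5/2)*t) * cos (t/2))"
proof -
  define M where "M = (2*real k+5/2)*t"
  have "(2*real k+4)*t = M + 3*t/2" "(2*real k+3)*t = M + t/2"
    "(2*real k+2)*t = M - t/2" "(2*real k+1)*t = M - 3*t/2"
    unfolding M_def by (simp_all add: algebra_simps)
  thus ?thesis unfolding Gk_def M_def[symmetric]
    by (simp only: sin_add sin_diff) (simp add: algebra_simps)
qed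

text \<open>On [0,pi), G_k(t) is a nonzero multiple of sin (phase k t), so G_k vanishes where the
  phase is a multiple of pi.\<close>
definition phase :: "nat \<Rightarrow> real \<Rightarrow> real" where
  "phase k t = (2*real k+5/2)*t - arctan (sin (3*t/2) / cos (t/2))"

lemma Gk_zero_at_phase_multiple:
  assumes t: "0 \<le> t" "t < pi" and h: "phase k t = real j * pi"
  shows "Gk k t = 0"
proof -
  define M where "M = (2*real k+5/2)*t"
  define r where "r = sin (3*t/2) / cos (t/2)"
  have c0: "cos (t/2) > 0" using t by (intro cos_gt_zero_pi) auto
  have "sin (M - arctan r) = 0"
    using h unfolding phase_def M_def r_def by (simp add: sin_npi)
  moreover have "sin (arctan r) = r * cos (arctan r)"
    by (simp add: sin_arctan cos_arctan)
  ultimately have "cos (arctan r) * (sin M - cos M * r) = 0"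
    by (simp add: sin_diff algebra_simps)
  moreover have "cos (arctan r) > 0"
    using arctan_bounded[of r] by (intro cos_gt_zero_pi) auto
  ultimately have "sin M - cos M * r = 0" by simp
  hence "sin M * cos (t/2) - cos M * sin (3*t/2) = 0"
    using c0 unfolding r_def by (simp add: field_simps)
  thus ?thesis unfolding Gk_phase_form M_def[symmetric] by (simp add: algebra_simps)
qed

lemma phase_0: "phase k 0 = 0"
  by (simp add: phase_def)

lemma phase_half_pi: "phase k (pi/2) = real (k+1) * pi"
proof -
  have "sin (3 * (pi/2) / 2) / cos (pi/2/2) = 1"
    using sin_pi_minus[of "pi/4"] by (simp add: sin_45 cos_45)
  hence "phase k (pi/2) = (2*real k+5/2)*(pi/2) - pi/4"
    unfolding phase_def by (simp add: arctan_one)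
  also have "\<dots> = real (k+1) * pi" by (simp add: algebra_simps)
  finally show ?thesis .
qed

text \<open>A point close to pi where the phase already exceeds (2k+2) pi.\<close>
definition t_end :: "nat \<Rightarrow> real" where
  "t_end k = pi - pi/(8*real k+10)"

lemma t_end_bounds: "pi - pi/10 \<le> t_end k" "t_end k < pi"
proof -
  have "pi/(8*real k+10) \<le> pi/10" by (intro divide_left_mono) auto
  thus "pi - pi/10 \<le> t_end k" unfolding t_end_def by simp
  show "t_end k < pi" unfolding t_end_def by simp
qed

lemma phase_continuous: "continuous_on {0..t_end k} (phase k)"
proof -
  have "cos (t/2) \<noteq> 0" if "t \<in> {0..t_end k}" for t
    using that t_end_bounds(2)[of k] by (intro less_imp_neq[symmetric] cos_gt_zero_pi) auto
  thus ?thesis unfolding phase_def[abs_def] by (intro continuous_intros) auto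
qed

lemma phase_t_end: "real (2*k+2) * pi \<le> phase k (t_end k)"
proof -
  define t where "t = t_end k"
  have c0: "cos (t/2) > 0"
    using t_end_bounds[of k] pi_gt_zero unfolding t_def by (intro cos_gt_zero_pi) auto
  have "sin (3*t/2) \<le> 0"
    using t_end_bounds[of k] unfolding t_def by (intro sin_le_zero) auto
  hence "arctan (sin (3*t/2) / cos (t/2)) \<le> 0"
    using c0 by (simp add: divide_nonpos_pos arctan_le_zero_iff)
  moreover have "(2*real k+5/2)*t = (2*real k+5/2)*pi - pi/4"
    unfolding t_def t_end_def by (simp add: field_simps)
  ultimately have "phase k t \<ge> (2*real k+5/2)*pi - pi/4" unfolding phase_def by simp
  moreover have "real (2*k+2) * pi \<le> (2*real k+5/2)*pi - pi/4" by (simp add: algebra_simps)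
  ultimately show ?thesis unfolding t_def by linarith
qed

lemma phase_attains_multiples:
  assumes j: "j \<in> {1..2*k+2}"
  shows "\<exists>t. 0 < t \<and> t < pi \<and> phase k t = real j * pi"
proof -
  have "real j * pi \<le> real (2*k+2) * pi" using j by (intro mult_right_mono) auto
  hence "real j * pi \<le> phase k (t_end k)" using phase_t_end[of k] by linarith
  moreover have "phase k 0 \<le> real j * pi" by (simp add: phase_0)
  ultimately have "phase k 0 \<le> real j * pi" "real j * pi \<le> phase k (t_end k)" by auto
  from IVT'[OF this _ phase_continuous]
  obtain t where t: "0 \<le> t" "t \<le> t_end k" "phase k t = real j * pi"
    using t_end_bounds[of k] pi_gt_zero by auto
  have "t \<noteq> 0" using t(3) j phase_0[of k] by auto
  thus ?thesis using t t_end_bounds[of k] by (intro exI[of _ t]) auto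
qed

text \<open>Hence G_k has 2k+1 distinct zeros in (0,pi) avoiding pi/2 (where sin 2t = 0).\<close>
lemma Gk_zeros:
  "\<exists>th. inj_on th ({1..2*k+2} - {k+1}) \<and>
     (\<forall>j \<in> {1..2*k+2} - {k+1}.
        0 < th j \<and> th j < pi \<and> sin (2 * th j) \<noteq> 0 \<and> Gk k (th j) = 0)"
proof -
  define J where "J = {1..2*k+2} - {k+1}"
  define th where "th j = (SOME t. 0 < t \<and> t < pi \<and> phase k t = real j * pi)" for j
  have th: "0 < th j \<and> th j < pi \<and> phase k (th j) = real j * pi" if "j \<in> J" for j
    using someI_ex[OF phase_attains_multiples] that unfolding th_def J_def by auto
  have inj: "inj_on th J"
    by (rule inj_onI) (metis th mult_cancel_right of_nat_eq_iff pi_neq_zero)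
  have sin2: "sin (2 * th j) \<noteq> 0" if jJ: "j \<in> J" for j
  proof -
    have "th j \<noteq> pi/2"
    proof
      assume "th j = pi/2"
      hence "real j * pi = real (k+1) * pi" using th[OF jJ] phase_half_pi[of k] by metis
      hence "j = k+1" by simp
      thus False using jJ unfolding J_def by simp
    qed
    hence "cos (th j) \<noteq> 0"
      using th[OF that] cos_inj_pi[of "th j" "pi/2"] by force
    thus ?thesis using th[OF that] sin_gt_zero[of "th j"] by (simp add: sin_double)
  qed
  have "Gk k (th j) = 0" if "j \<in> J" for j
    using th[OF that] by (intro Gk_zero_at_phase_multiple[of "th j" k j]) auto
  thus ?thesis using inj th sin2 unfolding J_def by blast
qed

lemma Pk_unit_circle_roots:
  "\<exists>U. length U = 4*k+2 \<and> distinct U \<and>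
     (\<forall>z\<in>set U. cmod z = 1 \<and> Im z \<noteq> 0 \<and> poly (map_poly of_int (Pk k)) z = 0)"
proof -
  define J where "J = {1..2*k+2} - {k+1}"
  obtain th where inj: "inj_on th J"
    and th: "\<And>j. j \<in> J \<Longrightarrow>
      0 < th j \<and> th j < pi \<and> sin (2 * th j) \<noteq> 0 \<and> Gk k (th j) = 0"
    using Gk_zeros[of k] unfolding J_def by blast
  define js where "js = sorted_list_of_set J"
  have js: "set js = J" "distinct js"
    unfolding js_def J_def by simp_all
  have "card J = 2*k+1" unfolding J_def by (simp add: card_Diff_singleton)
  hence len: "length js = 2*k+1" using js distinct_card by metis
  have cos_inj: "i = j" if "i \<in> J" "j \<in> J" "cos (th i) = cos (th j)" for i j
  proof -
    have "th i = th j"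
      using th[OF that(1)] th[OF that(2)] that(3) cos_inj_pi[of "th i" "th j"] by (simp add: less_imp_le)
    thus "i = j" by (rule inj_onD[OF inj _ that(1,2)])
  qed
  define U1 where "U1 = map (\<lambda>j. cis (th j)) js"
  define U2 where "U2 = map (\<lambda>j. cis (- th j)) js"
  have "inj_on (\<lambda>j. cis (th j)) J"
    by (rule inj_onI, rule cos_inj) (auto dest: arg_cong[where f = Re])
  hence distinct1: "distinct U1" unfolding U1_def using js by (simp add: distinct_map)
  have "inj_on (\<lambda>j. cis (- th j)) J"
    by (rule inj_onI, rule cos_inj) (auto dest: arg_cong[where f = Re])
  hence distinct2: "distinct U2" unfolding U2_def using js by (simp add: distinct_map)
  have upper: "Im z > 0" if "z \<in> set U1" for z
    using that th sin_gt_zero unfolding U1_def js(1)[symmetric] by auto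
  have lower: "Im z < 0" if "z \<in> set U2" for z
    using that th sin_gt_zero unfolding U2_def js(1)[symmetric] by auto
  have "set U1 \<inter> set U2 = {}" using upper lower by (meson disjoint_iff less_asym)
  hence "distinct (U1 @ U2)" using distinct1 distinct2 by simp
  moreover have "length (U1 @ U2) = 4*k+2" unfolding U1_def U2_def using len by simp
  moreover have "cmod z = 1 \<and> Im z \<noteq> 0 \<and> poly (map_poly of_int (Pk k)) z = 0"
    if z_in: "z \<in> set (U1 @ U2)" for z
  proof -
    obtain j t where "j \<in> J" "z = cis t" "t = th j \<or> t = - th j"
      using z_in unfolding U1_def U2_def js(1)[symmetric] by auto
    moreover have "poly (map_poly of_int (Pk k)) (cis t) = 0" if "t = th j \<or> t = - th j" "j \<in> J" for t j
      using that th[OF that(2)] by (auto intro!: cis_root_Pk simp: Gk_minus)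
    moreover have "Im z \<noteq> 0" using z_in upper lower by force
    ultimately show ?thesis by auto
  qed
  ultimately show ?thesis by blast
qed

text \<open>P_k has 4k+4 simple roots: alpha, 1/alpha and 4k+2 points on the unit circle.\<close>
lemma Pk_complex_roots:
  fixes a :: real
  assumes a: "0 < a" "a < 1" and root: "poly (map_poly of_int (Pk k)) a = 0"
  shows "rsquarefree (map_poly (of_int :: int \<Rightarrow> complex) (Pk k))"
    and "\<And>z. poly (map_poly (of_int :: int \<Rightarrow> complex) (Pk k)) z = 0
           \<Longrightarrow> cmod z = 1 \<or> z = of_real a \<or> z = of_real (1/a)"
proof -
  define L where "L = complex_roots_int (Pk k)"
  have fac: "map_poly of_int (Pk k) = (\<Prod>x\<leftarrow>L. [:-x, 1:])"
    unfolding L_def using Pk_degree_lead by (intro monic_complex_factorization) blast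
  have len: "length L = 4*k+4"
    using complex_roots_int(2)[of "Pk k"] Pk_degree_lead[of k] unfolding L_def by simp
  obtain U where U: "length U = 4*k+2" "distinct U"
    "\<forall>z\<in>set U. cmod z = 1 \<and> Im z \<noteq> 0 \<and> poly (map_poly of_int (Pk k)) z = 0"
    using Pk_unit_circle_roots by blast
  have inL: "z \<in> set L" if "poly (map_poly of_int (Pk k)) z = 0" for z
    using that unfolding fac poly_linear_prod_eq_0 .
  have real_roots: "poly (map_poly (of_int :: int \<Rightarrow> complex) (Pk k)) (of_real a) = 0"
    "poly (map_poly (of_int :: int \<Rightarrow> complex) (Pk k)) (of_real (1/a)) = 0"
    using root Pk_inverse_root[OF a root] unfolding poly_of_int_of_real by simp_all
  define R where "R = U @ [of_real a, of_real (1/a)]"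
  have "1 < 1/a" using a by simp
  hence "a \<noteq> 1/a" using a by linarith
  hence "complex_of_real a \<noteq> of_real (1/a)" by (metis of_real_eq_iff)
  hence "distinct R" using U unfolding R_def by auto
  moreover have "set R \<subseteq> set L" using U inL real_roots unfolding R_def by auto
  moreover have "length R = length L" using U len unfolding R_def by simp
  ultimately have L: "distinct L" "set L = set R" by (auto dest: distinct_sublist_length_eq)
  show "rsquarefree (map_poly (of_int :: int \<Rightarrow> complex) (Pk k))"
    unfolding fac using L(1) by (rule rsquarefree_linear_prod)
  show "cmod z = 1 \<or> z = of_real a \<or> z = of_real (1/a)"
    if "poly (map_poly (of_int :: int \<Rightarrow> complex) (Pk k)) z = 0" for z
    using inL[OF that] U L(2) unfolding R_def by auto
qed

lemma root_of_divisor: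
  fixes f g :: "int poly" and z :: complex
  assumes "f dvd g" and "poly (map_poly of_int f) z = 0"
  shows "poly (map_poly of_int g) z = 0"
  using assms by (auto elim!: dvdE simp: of_int_poly_hom.hom_mult)

text \<open>The irreducible factor of P_k vanishing at alpha also vanishes at 1/alpha: its constant
  term is a unit, so it needs a root outside the unit disc.\<close>
lemma Pk_factor_at_alpha:
  fixes f :: "int poly" and \<alpha> :: real
  assumes \<alpha>: "0 < \<alpha>" "\<alpha> < 1" "poly (map_poly of_int (Pk k)) \<alpha> = 0"
    and f: "lead_coeff f = 1" "f dvd Pk k" "poly (map_poly of_int f) (complex_of_real \<alpha>) = 0"
  shows "poly (map_poly of_int f) (complex_of_real (1/\<alpha>)) = 0"
proof -
  obtain v where v: "poly (map_poly of_int f) v = 0" "cmod v > 1"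
    using unit_constant_root_inside_imp_root_outside[OF f(1) dvd_Pk_unit_const[OF f(2)] f(3)] \<alpha>
    by auto
  have "cmod v = 1 \<or> v = of_real \<alpha> \<or> v = of_real (1/\<alpha>)"
    using Pk_complex_roots(2)[OF \<alpha> root_of_divisor[OF f(2) v(1)]] .
  hence "v = of_real (1/\<alpha>)" using v(2) \<alpha> by auto
  thus ?thesis using v(1) by simp
qed

text \<open>A factor coprime to the one carrying alpha and 1/alpha has only unimodular roots,
  hence by Kronecker's theorem only roots of unity.\<close>
lemma Pk_cofactor_roots_of_unity:
  fixes f g :: "int poly" and \<alpha> :: real and z :: complex
  assumes \<alpha>: "0 < \<alpha>" "\<alpha> < 1" "poly (map_poly of_int (Pk k)) \<alpha> = 0"
    and dvd: "f * g dvd Pk k" and g: "lead_coeff g = 1"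
    and f_roots: "poly (map_poly of_int f) (complex_of_real \<alpha>) = 0"
      "poly (map_poly of_int f) (complex_of_real (1/\<alpha>)) = 0"
    and z: "poly (map_poly of_int g) z = 0"
  shows "\<exists>n>0. z ^ n = 1"
proof (rule kronecker[OF g _ z])
  fix w :: complex assume w: "poly (map_poly of_int g) w = 0"
  have dvdC: "map_poly of_int f * map_poly of_int g
      dvd map_poly (of_int :: int \<Rightarrow> complex) (Pk k)"
    using dvd by (metis of_int_poly_hom.hom_dvd of_int_poly_hom.hom_mult)
  have "w \<noteq> of_real \<alpha>" "w \<noteq> of_real (1/\<alpha>)"
    using rsquarefree_dvd_no_common_root[OF Pk_complex_roots(1)[OF \<alpha>] dvdC] f_roots w by auto
  moreover have "poly (map_poly of_int (Pk k)) w = 0"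
    using root_of_divisor[OF dvd_mult_right[OF dvd] w] .
  ultimately show "cmod w = 1" using Pk_complex_roots(2)[OF \<alpha>] by blast
qed

theorem mainTheorem5:
  fixes k :: nat and fs :: "int poly list" and \<alpha> :: real
  assumes monic_irr: "\<forall>f \<in> set fs. lead_coeff f = 1 \<and> irreducible f"
    and fact: "prod_list fs = Pk k"
    and alpha_range: "0 < \<alpha>" "\<alpha> < 1"
    and alpha_root: "poly (map_poly (of_int :: int \<Rightarrow> real) (Pk k)) \<alpha> = 0"
    and alpha_unique: "\<forall>x::real. 0 < x \<and> x < 1 \<and> poly (map_poly (of_int :: int \<Rightarrow> real) (Pk k)) x = 0 \<longrightarrow> x = \<alpha>"
    and nonempty: "fs \<noteq> []"
    and first: "poly (map_poly (of_int :: int \<Rightarrow> real) (fs ! 0)) \<alpha> = 0"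
  shows "poly (map_poly (of_int :: int \<Rightarrow> real) (fs ! 0)) (1 / \<alpha>) = 0
    \<and> (\<forall>i. 1 \<le> i \<and> i < length fs \<longrightarrow>
          (\<forall>z::complex. poly (map_poly (of_int :: int \<Rightarrow> complex) (fs ! i)) z = 0 \<longrightarrow> (\<exists>n>0. z ^ n = 1)))"
proof -
  obtain f0 rest where fs: "fs = f0 # rest" using nonempty by (cases fs) auto
  have monic: "lead_coeff f = 1" if "f \<in> set fs" for f using monic_irr that by blast
  have factors: "f0 * prod_list rest = Pk k" using fact fs by simp
  have at_alpha: "poly (map_poly of_int f0) (complex_of_real \<alpha>) = 0"
    using first fs by (simp add: poly_of_int_of_real)
  have f0: "lead_coeff f0 = 1" "f0 dvd Pk k"
    using monic fs dvdI[OF factors[symmetric]] by auto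
  have at_inverse: "poly (map_poly of_int f0) (complex_of_real (1/\<alpha>)) = 0"
    using Pk_factor_at_alpha[OF alpha_range alpha_root f0 at_alpha] .
  have roots_of_unity: "\<exists>n>0. z ^ n = 1"
    if "f \<in> set rest" "poly (map_poly of_int f) z = 0" for f and z :: complex
  proof (rule Pk_cofactor_roots_of_unity[OF alpha_range alpha_root _ _ at_alpha at_inverse that(2)])
    show "f0 * f dvd Pk k" using that(1) factors by (metis mult_dvd_mono dvd_refl prod_list_dvd)
    show "lead_coeff f = 1" using that(1) monic fs by simp
  qed
  show ?thesis
  proof (intro conjI allI impI)
    show "poly (map_poly of_int (fs ! 0)) (1 / \<alpha>) = 0"
      using at_inverse fs unfolding poly_of_int_of_real by simp
    fix i and z :: complex
    assume i: "1 \<le> i \<and> i < length fs" and z: "poly (map_poly of_int (fs ! i)) z = 0"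
    have "fs ! i \<in> set rest" using i fs by (cases i) auto
    thus "\<exists>n>0. z ^ n = 1" using z by (rule roots_of_unity)
  qed
qed

end
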